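(* Let $b(n)=\lfloor n\varphi\rfloor$, $c(n)=\lfloor n\varphi^2+\tfrac12\rfloor$, and $x(n)=a(b(n))-b(a(n))$. Then: (a) $a(b(n))\ge b(a(n))$ for all $n\ge0$. (b) For $n\ge1$, $x(n)$ equals the parity (number mod $2$) of the number of $1$'s in the Fibonacci representation of $n-1$. (c) $b(a(b(n)))\ge a(b(a(n)))$ for all $n\ge 0$. (d) $a(a(b(n)))-a(b(a(n)))\in\{-2,0,2\}$ for all $n\ge0$. (e) Setting $d(n)=c(a(n))-a(b(n))-a(n)$, we have $d(n)\in\{-1,0,1\}$ for all $n\ge0$. (f) For $n\ge1$, $d(n)=0$ if and only if $\mathbf f[n-1]=1$. (g) For $n\ge 1$, $c(a(b(n)))+a(b(n))-a(b(b(n)))-2\,b(a(n))=1$.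
   Context: $\varphi=(1+\sqrt5)/2$. Let $(F_n)_{n\ge 0}$ be the Fibonacci numbers: $F_0=0$, $F_1=1$, $F_n=F_{n-1}+F_{n-2}$ for $n\ge 2$. Define $(a(n))_{n\ge 0}$ (OEIS A105774) by $a(0)=0$, $a(1)=1$, and for $n\ge 2$, $a(n)=F_{j+1}-a(n-F_j)$, where $j\ge 2$ is the unique index with $F_j<n\le F_{j+1}$. The Fibonacci (Zeckendorf) representation of $m\ge0$ is the binary string $e_1\cdots e_t$ with no two consecutive $1$'s and $m=\sum_{i=1}^t e_iF_{t-i+2}$ (empty for $m=0$). $\mathbf f=\mathbf f[0]\mathbf f[1]\mathbf f[2]\cdots=01001010\cdots$ is the infinite Fibonacci word, the fixed point of the morphism $0\mapsto 01$, $1\mapsto 0$. *)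

theory Defs
  imports Complex_Main "HOL-Number_Theory.Fib"
begin

definition phi :: real where "phi = (1 + sqrt 5) / 2"

lemma le_fib_Suc: "n \<le> fib (Suc n)"
proof (induction n rule: fib.induct)
  case 1 then show ?case by simp
next
  case 2 then show ?case by simp
next
  case (3 n)
  have "fib (Suc (Suc (Suc n))) = fib (Suc (Suc n)) + fib (Suc n)" by simp
  moreover have "fib (Suc n) > 0" by (simp add: fib_neq_0_nat)
  ultimately show ?case using 3 by simp
qed

definition fibidx :: "nat \<Rightarrow> nat" where
  "fibidx n = (LEAST j. n \<le> fib (Suc j))"

lemma fibidx_ge2: assumes "n \<ge> 2" shows "fibidx n \<ge> 2"
proof -
  have ex: "n \<le> fib (Suc (fibidx n))" unfolding fibidx_def
    by (rule LeastI[of _ n]) (rule le_fib_Suc)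
  show ?thesis
  proof (rule ccontr)
    assume "\<not> 2 \<le> fibidx n"
    then have "fibidx n = 0 \<or> fibidx n = 1" by auto
    then show False using ex assms by (auto simp: numeral_2_eq_2)
  qed
qed

function A :: "nat \<Rightarrow> nat" where
  "A n = (if n \<le> 1 then n
          else fib (Suc (fibidx n)) - A (n - fib (fibidx n)))"
  by auto
termination
proof (relation "measure id")
  fix n :: nat assume "\<not> n \<le> 1"
  then have "fibidx n \<ge> 2" using fibidx_ge2 by auto
  then have "fib (fibidx n) > 0" by (simp add: fib_neq_0_nat)
  then show "(n - fib (fibidx n), n) \<in> measure id" using \<open>\<not> n \<le> 1\<close> by simp
qed simp

declare A.simps[simp del]

definition B :: "nat \<Rightarrow> nat" where "B n = nat \<lfloor>real n * phi\<rfloor>"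
definition C :: "nat \<Rightarrow> nat" where "C n = nat \<lfloor>real n * phi ^ 2 + 1 / 2\<rfloor>"

text \<open>Zeckendorf representation e_1 ... e_t (True = digit 1), leading digit 1,
  no two consecutive 1's, m = sum e_i F_(t-i+2); empty for m = 0.\<close>
definition is_zeck_rep :: "nat \<Rightarrow> bool list \<Rightarrow> bool" where
  "is_zeck_rep m es \<longleftrightarrow>
     (es \<noteq> [] \<longrightarrow> hd es) \<and>
     (\<forall>k. Suc k < length es \<longrightarrow> \<not> (es ! k \<and> es ! Suc k)) \<and>
     m = (\<Sum>k<length es. if es ! k then fib (length es - k + 1) else 0)"

definition zeck :: "nat \<Rightarrow> bool list" where
  "zeck m = (THE es. is_zeck_rep m es)"

definition zeck_ones :: "nat \<Rightarrow> nat" where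
  "zeck_ones m = length (filter id (zeck m))"

text \<open>Fibonacci word: fixed point of 0 -> 01, 1 -> 0.\<close>
definition fib_morph :: "nat list \<Rightarrow> nat list" where
  "fib_morph w = concat (map (\<lambda>x. if x = 0 then [0, 1] else [0]) w)"

definition fword :: "nat \<Rightarrow> nat" where
  "fword n = ((fib_morph ^^ n) [0]) ! n"

end

(*
  Every n >= 2 splits as n = F_j + r with 1 <= r <= F_(j-1), and then a(n) = F_(j+1) - a(r).
  Since multiples r*phi with r < F_j stay more than |psi|^j away from the integers, the Beatty
  sequence b splits in the same way: b(F_j + r) = F_(j+1) + b(r) and b(F_m - s) = F_(m+1) - b(s) - 1.
  Hence x(F_j + r) = 1 - x(r), which gives (a) and (b). The other parts follow from recursions of
  the same shape: the increment Delta(w) = a(b(w) + 1) - a(b(w)) changes sign when the Fibonacci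
  index moves by two, giving (d); and rho(n) = {a(n) phi} - 1/2, whose sign decides the rounding in
  c(a(n)), satisfies rho(F_j + r) = -rho(r) - psi^(j+1). An invariant keeping |rho| away from 0
  shows that this sign flips at every step, just like x and like the Fibonacci word, for which
  f[F_j + i] = f[i]; this gives (e), (f) and (g).
*)
theory Submission
  imports Defs
begin

lemma fib_less_fib: "2 \<le> m \<Longrightarrow> m < n \<Longrightarrow> fib m < fib n"
proof -
  assume "2 \<le> m" "m < n"
  then obtain k where k: "m = Suc k" "k > 0" by (cases m) auto
  have "fib m < fib (Suc m)" using k fib_neq_0_nat[of k] by simp
  also have "\<dots> \<le> fib n" using \<open>m < n\<close> by (intro fib_mono) simp
  finally show ?thesis .
qed

lemma fib_less_fibD: "fib m < fib n \<Longrightarrow> m < n"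
  using fib_mono[of n m] by linarith

lemma fib_Suc_eq_add_pred: "j \<ge> 1 \<Longrightarrow> fib (Suc j) = fib j + fib (j - 1)"
  by (cases j) auto

lemma fibidx_bounds:
  assumes "n \<ge> 2"
  shows "fib (fibidx n) < n" "n \<le> fib (Suc (fibidx n))"
proof -
  show "n \<le> fib (Suc (fibidx n))" unfolding fibidx_def
    by (rule LeastI[of _ n]) (rule le_fib_Suc)
  obtain k where k: "fibidx n = Suc k" using fibidx_ge2[OF assms] by (cases "fibidx n") auto
  have "\<not> n \<le> fib (Suc k)"
  proof
    assume "n \<le> fib (Suc k)"
    then have "fibidx n \<le> k" unfolding fibidx_def by (rule Least_le)
    then show False using k by simp
  qed
  then show "fib (fibidx n) < n" using k by simp
qed

lemma fibidx_eqI: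
  assumes "j \<ge> 2" "fib j < n" "n \<le> fib (Suc j)"
  shows "fibidx n = j"
  unfolding fibidx_def
proof (rule Least_equality)
  fix i assume "n \<le> fib (Suc i)"
  then have "\<not> fib (Suc i) \<le> fib j" using assms(2) by linarith
  then show "j \<le> i" using fib_mono[of "Suc i" j] by linarith
qed fact

lemma fib_split:
  assumes "n \<ge> 2"
  obtains j r where "j \<ge> 2" "1 \<le> r" "r \<le> fib (j - 1)" "n = fib j + r" "fibidx n = j"
proof
  let ?j = "fibidx n"
  show "?j \<ge> 2" using fibidx_ge2[OF assms] .
  then have "fib (Suc ?j) = fib ?j + fib (?j - 1)" by (intro fib_Suc_eq_add_pred) simp
  then show "n - fib ?j \<le> fib (?j - 1)" using fibidx_bounds[OF assms] by simp
qed (use fibidx_bounds[OF assms] in auto)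

lemma fib_split_less: "j \<ge> 2 \<Longrightarrow> r < fib j + r"
  using fib_neq_0_nat[of j] by simp

lemma fib_split_induct [consumes 1, case_names one split]:
  assumes "n \<ge> 1" and "P 1"
    and "\<And>j r. j \<ge> 2 \<Longrightarrow> 1 \<le> r \<Longrightarrow> r \<le> fib (j - 1) \<Longrightarrow> P r \<Longrightarrow> P (fib j + r)"
  shows "P n"
  using assms(1)
proof (induction n rule: less_induct)
  case (less n)
  show ?case
  proof (cases "n = 1")
    case False
    then have "n \<ge> 2" using less.prems by simp
    then obtain j r where "j \<ge> 2" "1 \<le> r" "r \<le> fib (j - 1)" "n = fib j + r"
      by (rule fib_split)
    with less.IH[of r] assms(3) fib_split_less show ?thesis by blast
  qed (use assms(2) in simp)
qed

lemma A_0 [simp]: "A 0 = 0" and A_1 [simp]: "A 1 = 1" and A_Suc_0 [simp]: "A (Suc 0) = 1"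
  by (simp_all add: A.simps)

lemma A_fib_plus:
  assumes "j \<ge> 2" "1 \<le> r" "r \<le> fib (j - 1)"
  shows "A (fib j + r) = fib (Suc j) - A r"
proof -
  have "fib j + r \<le> fib (Suc j)" using assms fib_Suc_eq_add_pred[of j] by simp
  then have "fibidx (fib j + r) = j" using assms by (intro fibidx_eqI) auto
  moreover have "\<not> fib j + r \<le> 1" using assms fib_neq_0_nat[of j] by simp
  ultimately show ?thesis by (subst A.simps) simp
qed

lemma A_fibidx_bounds:
  "n \<ge> 2 \<Longrightarrow> fib (fibidx n) \<le> A n \<and> A n < fib (Suc (fibidx n))"
proof (induction n rule: less_induct)
  case (less n)
  obtain j r where split: "j \<ge> 2" "1 \<le> r" "r \<le> fib (j - 1)" "n = fib j + r" "fibidx n = j"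
    using fib_split less.prems by blast
  have "1 \<le> A r \<and> A r \<le> fib (j - 1)"
  proof (cases "r = 1")
    case True then show ?thesis using fib_neq_0_nat[of "j - 1"] split by simp
  next
    case False
    then have r: "r \<ge> 2" using split by simp
    have "fib (fibidx r) < fib (j - 1)" using fibidx_bounds(1)[OF r] split by simp
    then have "fib (Suc (fibidx r)) \<le> fib (j - 1)" by (intro fib_mono Suc_leI) (rule fib_less_fibD)
    moreover have "fib (fibidx r) \<ge> 1" using fib_neq_0_nat fibidx_ge2[OF r] by (simp add: Suc_le_eq)
    moreover have "r < n" using split fib_split_less by simp
    ultimately show ?thesis using less.IH[OF _ r] split by simp
  qed
  moreover have "fib (Suc j) = fib j + fib (j - 1)" using split by (intro fib_Suc_eq_add_pred) simp
  ultimately show ?case using A_fib_plus[OF split(1-3)] split(4,5) by (simp; arith)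
qed

lemma A_pos: "n \<ge> 1 \<Longrightarrow> A n \<ge> 1"
  using A_fibidx_bounds[of n] fib_neq_0_nat[of "fibidx n"] fibidx_ge2[of n]
  by (cases "n = 1") (auto simp: Suc_le_eq)

lemma A_less_fib: assumes "1 \<le> r" "r \<le> fib k" "k \<ge> 3" shows "A r < fib k"
proof (cases "r = 1")
  case True
  have "fib 3 \<le> fib k" using assms by (intro fib_mono)
  then show ?thesis using True by (simp add: numeral_3_eq_3)
next
  case False
  then have r: "r \<ge> 2" using assms by simp
  have "fib (fibidx r) < fib k" using fibidx_bounds(1)[OF r] assms by simp
  then have "fib (Suc (fibidx r)) \<le> fib k" by (intro fib_mono Suc_leI) (rule fib_less_fibD)
  then show ?thesis using A_fibidx_bounds[OF r] by simp
qed

lemma A_le_fib: assumes "r \<le> fib k" "k \<ge> 1" shows "A r \<le> fib k"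
proof -
  consider "r = 0" | "r = 1" | "r \<ge> 2" "k \<ge> 3"
    using assms(1) fib_mono[of k 2] by fastforce
  then show ?thesis
  proof cases
    case 2 then show ?thesis using fib_neq_0_nat[of k] assms(2) by simp
  next
    case 3 then show ?thesis using A_less_fib[of r k] assms(1) by simp
  qed simp
qed

lemma fib_3: "fib 3 = 2" and fib_4: "fib 4 = 3" and fib_5: "fib 5 = 5"
  by (simp_all add: numeral_eq_Suc)

lemma A_2 [simp]: "A 2 = 1" and A_3 [simp]: "A 3 = 2" and A_4 [simp]: "A 4 = 4" and A_5 [simp]: "A 5 = 4"
proof -
  show "A 2 = 1" using A_fib_plus[of 2 1] by (simp add: numeral_2_eq_2)
  show "A 3 = 2" using A_fib_plus[of 3 1] by (simp add: fib_3 numeral_3_eq_3)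
  show "A 4 = 4" using A_fib_plus[of 4 1] by (simp add: fib_3 fib_4 fib_5)
  show "A 5 = 4" using A_fib_plus[of 4 2] \<open>A 2 = 1\<close> by (simp add: fib_3 fib_4 fib_5)
qed

definition psi :: real where "psi = (1 - sqrt 5) / 2"
definition tau :: real where "tau = (sqrt 5 - 1) / 2"

lemma sqrt5_bounds: "2.2 < sqrt (5::real)" "sqrt (5::real) < 2.25"
  by (rule real_less_rsqrt, simp add: power2_eq_square) (rule real_less_lsqrt, simp_all add: power2_eq_square)

lemma psi_eq: "psi = - tau" by (simp add: psi_def tau_def field_simps)
lemma phi_eq: "phi = 1 + tau" by (simp add: phi_def tau_def field_simps)
lemma tau_pos: "0 < tau" and tau_less_1: "tau < 1"
  using sqrt5_bounds by (simp_all add: tau_def)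
lemma tau_sq: "tau * tau = 1 - tau"
  by (simp add: tau_def field_simps algebra_simps)
lemma phi_mult_tau: "phi * tau = 1" using tau_sq by (simp add: phi_eq algebra_simps)
lemma psi_sq: "psi * psi = psi + 1" using tau_sq by (simp add: psi_eq algebra_simps)
lemma phi_mult_psi: "phi * psi = -1" using phi_mult_tau by (simp add: psi_eq)
lemma phi_plus_psi: "phi + psi = 1" by (simp add: psi_eq phi_eq)
lemma phi_plus_tau: "phi + tau = sqrt 5" by (simp add: phi_def tau_def field_simps)
lemma phi_bounds: "1.6 < phi" "phi < 1.625" using sqrt5_bounds by (simp_all add: phi_def)
lemma phi_gt_1: "phi > 1" using phi_bounds by simp

lemma tau_power_le_1: "tau ^ k \<le> 1" using tau_pos tau_less_1 by (simp add: power_le_one)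
lemma tau_power_pos: "tau ^ k > 0" using tau_pos by simp
lemma abs_psi_power: "\<bar>psi ^ k\<bar> = tau ^ k"
  using tau_pos by (simp add: psi_eq power_abs)

lemma phi_mult_fib: "phi * real (fib k) = real (fib (Suc k)) - psi ^ k"
proof (induction k rule: fib.induct)
  case (3 n)
  have "phi * real (fib (Suc (Suc n))) = phi * real (fib (Suc n)) + phi * real (fib n)"
    by (simp add: algebra_simps)
  also have "\<dots> = real (fib (Suc (Suc (Suc n)))) - (psi ^ Suc n + psi ^ n)"
    using 3 by simp
  also have "psi ^ Suc n + psi ^ n = psi ^ n * (psi * psi)"
    using psi_sq by (simp add: algebra_simps)
  also have "\<dots> = psi ^ Suc (Suc n)" by (simp add: algebra_simps)
  finally show ?case .
qed (use phi_plus_psi in \<open>simp_all add: algebra_simps\<close>)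

lemma sqrt5_mult_fib: "sqrt 5 * real (fib k) = phi ^ k - psi ^ k"
  using fib_closed_form[of k] by (simp add: phi_def psi_def)

text \<open>\<open>p\<^sup>2 - s p - s\<^sup>2\<close> is the norm of \<open>p - s \<phi>\<close>; a 2-adic descent shows that it vanishes only
  for \<open>s = 0\<close>.\<close>
lemma golden_norm_nonzero:
  fixes p s :: int
  shows "s \<noteq> 0 \<Longrightarrow> p * p - s * p - s * s \<noteq> 0"
proof (induction "nat \<bar>s\<bar>" arbitrary: p s rule: less_induct)
  case less
  show ?case
  proof (cases "even s \<and> even p")
    case True
    then obtain s' p' where sp: "s = 2 * s'" "p = 2 * p'" by (auto elim!: evenE)
    have "s' \<noteq> 0" "nat \<bar>s'\<bar> < nat \<bar>s\<bar>" using less.prems sp by auto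
    then have "p' * p' - s' * p' - s' * s' \<noteq> 0" using less.hyps by blast
    then show ?thesis using sp by (simp add: algebra_simps)
  next
    case False
    have "p * p - s * p - s * s = p * (p - s) - s * s" by (simp add: algebra_simps)
    moreover have "odd (p * (p - s) - s * s)" using False by (cases "even s") auto
    ultimately have "odd (p * p - s * p - s * s)" by simp
    then show ?thesis by (metis even_zero)
  qed
qed

lemma golden_norm_factor:
  fixes x y :: real
  shows "(x * phi - y) * (x * psi - y) = y * y - x * y - x * x"
proof -
  have "(x * phi - y) * (x * psi - y) = x * x * (phi * psi) - x * y * (phi + psi) + y * y"
    by (simp add: algebra_simps)
  then show ?thesis by (simp add: phi_mult_psi phi_plus_psi)
qed

lemma sqrt5_mult_less_fib:
  assumes "s < fib m"
  shows "real s * sqrt 5 \<le> phi ^ m + tau ^ m - sqrt 5"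
proof -
  have "real s * sqrt 5 \<le> (real (fib m) - 1) * sqrt 5"
    using assms by (intro mult_right_mono) auto
  also have "\<dots> = phi ^ m - psi ^ m - sqrt 5" using sqrt5_mult_fib[of m] by (simp add: algebra_simps)
  also have "\<dots> \<le> phi ^ m + tau ^ m - sqrt 5" using abs_psi_power[of m] by linarith
  finally show ?thesis .
qed

text \<open>\<open>(s \<phi> - p) (s \<psi> - p)\<close> is a nonzero integer, while the conjugate factor is at most
  \<open>s \<surd>5 + \<tau>\<^sup>m\<close>, which is too small for \<open>s < F\<^sub>m\<close>.\<close>
lemma phi_mult_far_from_int:
  fixes s m :: nat and p :: int
  assumes "1 \<le> s" "s < fib m"
  shows "\<bar>real s * phi - of_int p\<bar> > tau ^ m"
proof (rule ccontr)
  assume "\<not> ?thesis"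
  then have close: "\<bar>real s * phi - of_int p\<bar> \<le> tau ^ m" by simp
  then have p_lo: "real s * phi - tau ^ m \<le> of_int p" and p_hi: "of_int p \<le> real s * phi + tau ^ m"
    by linarith+
  have s_psi: "real s * psi = - (real s * tau)" by (simp add: psi_eq)
  have "real s * phi \<ge> phi" "real s * tau \<ge> 0" using assms(1) phi_gt_1 tau_pos by simp_all
  then have conj_pos: "of_int p - real s * psi > 0"
    using p_lo s_psi tau_power_le_1[of m] phi_gt_1 by linarith
  have "real s * sqrt 5 = real s * phi + real s * tau" using phi_plus_tau by (metis distrib_left)
  then have conj_le: "of_int p - real s * psi \<le> real s * sqrt 5 + tau ^ m"
    using p_hi s_psi by linarith
  have "p * p - int s * p - int s * int s \<noteq> 0"
    using golden_norm_nonzero[of "int s" p] assms(1) by simp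
  then have "1 \<le> \<bar>of_int (p * p - int s * p - int s * int s) :: real\<bar>" by linarith
  also have "of_int (p * p - int s * p - int s * int s) = (real s * phi - of_int p) * (real s * psi - of_int p)"
    using golden_norm_factor[of "real s" "of_int p"] by simp
  also have "\<bar>\<dots>\<bar> = \<bar>real s * phi - of_int p\<bar> * (of_int p - real s * psi)"
    using conj_pos by (simp add: abs_mult)
  also have "\<dots> \<le> tau ^ m * (real s * sqrt 5 + tau ^ m)"
    using close conj_pos conj_le by (intro mult_mono) auto
  also have "\<dots> \<le> tau ^ m * (phi ^ m + 2 * tau ^ m - sqrt 5)"
    using sqrt5_mult_less_fib[OF assms(2)] tau_power_pos[of m] by (intro mult_left_mono) auto
  also have "\<dots> = (phi * tau) ^ m + tau ^ m * (2 * tau ^ m - sqrt 5)"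
    by (simp add: algebra_simps power_mult_distrib)
  also have "\<dots> < 1"
  proof -
    have "2 * tau ^ m - sqrt 5 < 0" using tau_power_le_1[of m] sqrt5_bounds by linarith
    then show ?thesis using phi_mult_tau tau_power_pos[of m] by (simp add: mult_pos_neg)
  qed
  finally show False by simp
qed

lemma B_real: "real (B x) = of_int \<lfloor>real x * phi\<rfloor>"
  using phi_gt_1 unfolding B_def by simp

lemma B_floor_bounds: "real (B x) \<le> real x * phi" "real x * phi < real (B x) + 1"
  unfolding B_real by linarith+

lemma B_eqI: assumes "real k \<le> real x * phi" "real x * phi < real k + 1" shows "B x = k"
proof -
  have "\<lfloor>real x * phi\<rfloor> = int k" using assms by (intro floor_unique) auto
  then show ?thesis unfolding B_def by simp
qed

lemma B_0 [simp]: "B 0 = 0" and B_1 [simp]: "B 1 = 1" and B_2 [simp]: "B 2 = 3" and B_3 [simp]: "B 3 = 4"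
  by (simp add: B_def) (rule B_eqI; use phi_bounds in simp)+

lemma B_Suc_0 [simp]: "B (Suc 0) = 1" using B_1 by simp

lemma B_mono: "x \<le> y \<Longrightarrow> B x \<le> B y"
  unfolding B_def using phi_gt_1 by (intro nat_mono floor_mono mult_right_mono) auto

lemma self_le_B: "x \<le> B x"
proof -
  have "real x * 1 \<le> real x * phi" using phi_gt_1 by (intro mult_left_mono) auto
  then show ?thesis using B_floor_bounds(2)[of x] by linarith
qed

lemma psi_power_gt_neg1: "psi ^ k > -1"
proof (cases k)
  case (Suc k')
  have "tau * tau ^ k' \<le> tau * 1" using tau_power_le_1[of k'] tau_pos by (intro mult_left_mono) auto
  then have "tau ^ k < 1" using Suc tau_less_1 by simp
  then show ?thesis using abs_psi_power[of k] by linarith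
qed simp

lemma B_fib_bounds: "B (fib k) \<le> fib (Suc k)" "fib (Suc k) \<le> B (fib k) + 1"
proof -
  have "psi ^ k \<le> 1" using abs_psi_power[of k] tau_power_le_1[of k] by linarith
  then show "B (fib k) \<le> fib (Suc k)" "fib (Suc k) \<le> B (fib k) + 1"
    using phi_mult_fib[of k] psi_power_gt_neg1[of k] B_floor_bounds[of "fib k"]
    by (simp_all add: mult.commute; linarith)+
qed

lemma B_frac_bounds:
  assumes "1 \<le> s" "s < fib m"
  shows "real (B s) + tau ^ m < real s * phi" "real s * phi < real (B s) + 1 - tau ^ m"
  using phi_mult_far_from_int[OF assms, of "int (B s)"] phi_mult_far_from_int[OF assms, of "int (B s) + 1"]
    B_floor_bounds[of s]
  by simp_all

text \<open>\<open>F\<^sub>j \<phi>\<close> lies within \<open>\<tau>\<^sup>j\<close> of \<open>F\<^sub>j\<^sub>+\<^sub>1\<close>, while \<open>r \<phi>\<close> stays more than \<open>\<tau>\<^sup>j\<close> away from the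
  integers, so adding the two does not cross an integer.\<close>
lemma B_fib_plus:
  assumes "j \<ge> 2" "1 \<le> r" "r \<le> fib (j - 1)"
  shows "B (fib j + r) = fib (Suc j) + B r"
proof (cases "j = 2")
  case True
  have "B (fib 2 + 1) = fib 3 + B 1" using B_2 by (simp add: fib_3 numeral_2_eq_2)
  then show ?thesis using assms True by simp
next
  case False
  then have "fib (j - 1) < fib j" using assms by (intro fib_less_fib) auto
  then have "r < fib j" using assms by simp
  then have "real (B r) + tau ^ j < real r * phi" "real r * phi < real (B r) + 1 - tau ^ j"
    using B_frac_bounds assms by auto
  moreover have "real (fib j + r) * phi = real (fib (Suc j)) - psi ^ j + real r * phi"
    using phi_mult_fib[of j] by (simp add: algebra_simps)
  moreover have "\<bar>psi ^ j\<bar> = tau ^ j" by (rule abs_psi_power)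
  ultimately show ?thesis by (intro B_eqI) (simp; linarith)+
qed

lemma B_fib_minus:
  assumes "1 \<le> s" "s < fib m"
  shows "B (fib m - s) + B s + 1 = fib (Suc m)"
proof -
  have frac: "real (B s) + tau ^ m < real s * phi" "real s * phi < real (B s) + 1 - tau ^ m"
    using B_frac_bounds assms by auto
  have psi: "- (tau ^ m) \<le> psi ^ m" "psi ^ m \<le> tau ^ m" using abs_psi_power[of m] by linarith+
  have eq: "real (fib m - s) * phi = real (fib (Suc m)) - psi ^ m - real s * phi"
    using phi_mult_fib[of m] assms by (simp add: algebra_simps of_nat_diff)
  have "0 \<le> real (fib m - s) * phi" using phi_gt_1 by simp
  then have le: "B s + 1 \<le> fib (Suc m)" using frac psi eq by (simp; linarith)
  then have diff: "real (fib (Suc m) - B s - 1) = real (fib (Suc m)) - real (B s) - 1"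
    by (simp add: of_nat_diff)
  have "B (fib m - s) = fib (Suc m) - B s - 1"
  proof (rule B_eqI)
    show "real (fib (Suc m) - B s - 1) \<le> real (fib m - s) * phi"
      unfolding diff eq using frac psi by linarith
    show "real (fib m - s) * phi < real (fib (Suc m) - B s - 1) + 1"
      unfolding diff eq using frac psi by linarith
  qed
  then show ?thesis using le by simp
qed

lemma B_le_fib:
  assumes "j \<ge> 1" "r \<le> fib (j - 1)"
  shows "B r \<le> fib j"
proof -
  have "B r \<le> B (fib (j - 1))" using assms by (intro B_mono)
  also have "\<dots> \<le> fib j" using B_fib_bounds(1)[of "j - 1"] assms by simp
  finally show ?thesis .
qed

definition rounds_up :: "nat \<Rightarrow> int" where
  "rounds_up m = (if real m * phi - real (B m) \<ge> 1/2 then 1 else 0)"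

lemma C_eq: "int (C m) = int m + int (B m) + rounds_up m"
proof -
  have "phi ^ 2 = phi + 1" using phi_mult_tau by (simp add: power2_eq_square phi_eq algebra_simps)
  then have "real m * phi ^ 2 + 1/2 = real m + (real m * phi + 1/2)" by (simp add: algebra_simps)
  moreover note B_floor_bounds[of m]
  ultimately have "\<lfloor>real m * phi ^ 2 + 1/2\<rfloor> = int m + int (B m) + rounds_up m"
    unfolding rounds_up_def by (intro floor_unique) auto
  moreover have "rounds_up m \<ge> 0" by (simp add: rounds_up_def)
  ultimately show ?thesis unfolding C_def by simp
qed

definition X :: "nat \<Rightarrow> int" where "X n = int (A (B n)) - int (B (A n))"

lemma B_A_fib_plus:
  assumes "j \<ge> 2" "1 \<le> r" "r \<le> fib (j - 1)"
  shows "B (A (fib j + r)) + B (A r) + 1 = fib (Suc (Suc j))"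
proof -
  have "1 \<le> A r" "A r \<le> fib (j - 1)" using A_pos A_le_fib assms by auto
  moreover have "fib (j - 1) < fib (Suc j)" using fib_mono[of "j - 1" j] fib_less_fib[of j "Suc j"] assms by simp
  ultimately show ?thesis using B_fib_minus[of "A r" "Suc j"] A_fib_plus[OF assms] by simp
qed

lemma A_B_fib_plus:
  assumes "j \<ge> 2" "1 \<le> r" "r \<le> fib (j - 1)"
  shows "A (B (fib j + r)) + A (B r) = fib (Suc (Suc j))"
proof -
  have "1 \<le> B r" "B r \<le> fib j" using self_le_B[of r] B_le_fib[of j r] assms by auto
  then have "A (fib (Suc j) + B r) = fib (Suc (Suc j)) - A (B r)" "A (B r) \<le> fib (Suc (Suc j))"
    using A_fib_plus[of "Suc j" "B r"] A_le_fib[of "B r" j] fib_mono[of j "Suc (Suc j)"] assms by auto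
  then show ?thesis using B_fib_plus[OF assms] by simp
qed

lemma X_fib_plus:
  assumes "j \<ge> 2" "1 \<le> r" "r \<le> fib (j - 1)"
  shows "X (fib j + r) = 1 - X r"
  using B_A_fib_plus[OF assms] A_B_fib_plus[OF assms] unfolding X_def by linarith

lemma X_0 [simp]: "X 0 = 0" and X_1 [simp]: "X 1 = 0" and X_Suc_0 [simp]: "X (Suc 0) = 0"
  by (simp_all add: X_def)

lemma X_cases: "X n = 0 \<or> X n = 1"
proof (cases "n = 0")
  case False
  then have "n \<ge> 1" by simp
  then show ?thesis by (induction n rule: fib_split_induct) (auto simp: X_fib_plus)
qed simp

lemma B_A_le_A_B: "B (A n) \<le> A (B n)"
  using X_cases[of n] unfolding X_def by auto

lemma A_B_A_le_B_A_B: "A (B (A n)) \<le> B (A (B n))"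
proof (cases "n \<ge> 2")
  case False
  then have "n = 0 \<or> n = 1" by auto
  then show ?thesis by auto
next
  case True
  obtain j r where split: "j \<ge> 2" "1 \<le> r" "r \<le> fib (j - 1)" "n = fib j + r"
    using fib_split[OF True] by blast
  have Br: "1 \<le> B r" "B r \<le> fib j" using self_le_B[of r] B_le_fib[of j r] split by auto
  have "B n = fib (Suc j) + B r" using B_fib_plus split by simp
  then have "fibidx (B n) = Suc j" using Br split(1) by (intro fibidx_eqI) auto
  then have "fib (Suc j) \<le> A (B n)" using A_fibidx_bounds[of "B n"] \<open>B n = _\<close> Br fib_neq_0_nat[of "Suc j"] by simp
  then have "B (fib (Suc j)) \<le> B (A (B n))" by (rule B_mono)
  then have upper: "fib (Suc (Suc j)) \<le> B (A (B n)) + 1" using B_fib_bounds(2)[of "Suc j"] by simp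
  have "1 \<le> B (A n)" using self_le_B[of "A n"] A_pos[of n] True by simp
  moreover have "B (A n) \<le> fib (Suc (Suc j))" using B_A_fib_plus[OF split(1-3)] split(4) by simp
  ultimately have "A (B (A n)) < fib (Suc (Suc j))" using A_less_fib[of "B (A n)" "Suc (Suc j)"] split by simp
  then show ?thesis using upper by simp
qed

fun digits_val :: "bool list \<Rightarrow> nat" where
  "digits_val [] = 0"
| "digits_val (b # bs) = (if b then fib (length bs + 2) else 0) + digits_val bs"

fun no_adjacent_ones :: "bool list \<Rightarrow> bool" where
  "no_adjacent_ones (b1 # b2 # bs) = (\<not> (b1 \<and> b2) \<and> no_adjacent_ones (b2 # bs))"
| "no_adjacent_ones _ = True"

lemma sum_eq_digits_val:
  "(\<Sum>k<length es. if es ! k then fib (length es - k + 1) else 0) = digits_val es"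
proof (induction es)
  case (Cons b bs)
  have "(\<Sum>k<length (b # bs). if (b # bs) ! k then fib (length (b # bs) - k + 1) else 0)
     = (if b then fib (length bs + 2) else 0) +
       (\<Sum>k<length bs. if bs ! k then fib (length bs - k + 1) else 0)"
    by (simp only: length_Cons sum.lessThan_Suc_shift nth_Cons_0 nth_Cons_Suc diff_Suc_Suc
        diff_zero) (simp add: numeral_2_eq_2)
  then show ?case using Cons by simp
qed simp

lemma no_adjacent_ones_iff:
  "(\<forall>k. Suc k < length es \<longrightarrow> \<not> (es ! k \<and> es ! Suc k)) \<longleftrightarrow> no_adjacent_ones es"
proof (induction es rule: no_adjacent_ones.induct)
  case (1 b1 b2 bs)
  have "(\<forall>k. Suc k < Suc (Suc n) \<longrightarrow> P k) \<longleftrightarrow> P 0 \<and> (\<forall>k. Suc k < Suc n \<longrightarrow> P (Suc k))"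
    for n and P :: "nat \<Rightarrow> bool"
    by (metis Suc_less_eq nat.exhaust zero_less_Suc)
  from this[of "length bs"] show ?case using 1 by simp
qed auto

lemma is_zeck_rep_iff:
  "is_zeck_rep m es \<longleftrightarrow> (es \<noteq> [] \<longrightarrow> hd es) \<and> no_adjacent_ones es \<and> m = digits_val es"
  unfolding is_zeck_rep_def no_adjacent_ones_iff sum_eq_digits_val ..

lemma no_adjacent_ones_Cons: "no_adjacent_ones (x # xs) \<Longrightarrow> no_adjacent_ones xs"
  by (cases xs) auto

lemma no_adjacent_ones_False_Cons [simp]: "no_adjacent_ones (False # xs) = no_adjacent_ones xs"
  by (cases xs) auto

lemma no_adjacent_ones_replicate_False:
  "no_adjacent_ones (replicate k False @ es) = no_adjacent_ones es"
  by (induction k) auto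

lemma digits_val_replicate_False: "digits_val (replicate k False @ es) = digits_val es"
  by (induction k) auto

lemma digits_val_bounds:
  "no_adjacent_ones bs \<Longrightarrow>
     digits_val bs < fib (length bs + 2) \<and> (bs \<noteq> [] \<longrightarrow> \<not> hd bs \<longrightarrow> digits_val bs < fib (length bs + 1))"
proof (induction bs rule: no_adjacent_ones.induct)
  case (1 b1 b2 bs)
  then have IH: "digits_val (b2 # bs) < fib (length bs + 3)"
     "\<not> b2 \<longrightarrow> digits_val (b2 # bs) < fib (length bs + 2)" by (simp_all add: numeral_3_eq_3)
  have "fib (length bs + 4) = fib (length bs + 3) + fib (length bs + 2)"
    by (simp add: eval_nat_numeral)
  moreover have "fib (length bs + 3) \<le> fib (length bs + 4)" by (intro fib_mono) simp
  ultimately show ?case using 1 IH by (cases b1) (auto simp: eval_nat_numeral)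
qed (auto simp: numeral_3_eq_3)

lemma digits_val_less: "no_adjacent_ones bs \<Longrightarrow> digits_val bs < fib (length bs + 2)"
  using digits_val_bounds by blast

lemma digits_val_hd: "es \<noteq> [] \<Longrightarrow> hd es \<Longrightarrow> fib (length es + 1) \<le> digits_val es"
  by (cases es) auto

lemma digits_val_inj:
  "length xs = length ys \<Longrightarrow> no_adjacent_ones xs \<Longrightarrow> no_adjacent_ones ys \<Longrightarrow>
     digits_val xs = digits_val ys \<Longrightarrow> xs = ys"
proof (induction xs arbitrary: ys)
  case (Cons x xs)
  obtain y ys' where ys: "ys = y # ys'" using Cons.prems by (cases ys) auto
  have adj: "no_adjacent_ones xs" "no_adjacent_ones ys'" using Cons.prems ys no_adjacent_ones_Cons by auto
  have len: "length xs = length ys'" using Cons.prems ys by simp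
  have "digits_val xs < fib (length xs + 2)" "digits_val ys' < fib (length xs + 2)"
    using digits_val_less[OF adj(1)] digits_val_less[OF adj(2)] len by auto
  then have "x = y" using Cons.prems ys len by (cases x; cases y) auto
  moreover have "fib (length xs + 2) = fib (length ys' + 2)" using len by simp
  ultimately have "digits_val xs = digits_val ys'" using Cons.prems(4) ys by (cases y) simp_all
  then show ?case using Cons.IH[OF len adj] \<open>x = y\<close> ys by simp
qed simp

lemma zeck_rep_unique: "is_zeck_rep m xs \<Longrightarrow> is_zeck_rep m ys \<Longrightarrow> xs = ys"
proof -
  have not_shorter: "\<not> length xs < length ys" if "is_zeck_rep m xs" "is_zeck_rep m ys" for xs ys
  proof
    assume "length xs < length ys"
    then have "fib (length xs + 2) \<le> fib (length ys + 1)" by (intro fib_mono) simp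
    moreover have "fib (length ys + 1) \<le> m" using that(2) \<open>length xs < length ys\<close>
      by (cases ys) (auto simp: is_zeck_rep_iff)
    moreover have "m < fib (length xs + 2)" using that(1) digits_val_less by (simp add: is_zeck_rep_iff)
    ultimately show False by simp
  qed
  assume reps: "is_zeck_rep m xs" "is_zeck_rep m ys"
  then have "length xs = length ys" using not_shorter[of xs ys] not_shorter[of ys xs] by linarith
  then show "xs = ys" using reps digits_val_inj[of xs ys] by (simp add: is_zeck_rep_iff)
qed

lemma zeck_rep_fib_plus:
  assumes "is_zeck_rep m es" "j \<ge> 2" "m < fib (j - 1)"
  shows "is_zeck_rep (fib j + m) (True # replicate (j - 2 - length es) False @ es)"
proof -
  have rep: "es \<noteq> [] \<longrightarrow> hd es" "no_adjacent_ones es" "m = digits_val es"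
    using assms(1) by (auto simp: is_zeck_rep_iff)
  have gap: "length es + 3 \<le> j" if "es \<noteq> []"
  proof -
    have "fib (length es + 1) < fib (j - 1)" using rep that digits_val_hd assms(3) by fastforce
    then show ?thesis using fib_less_fibD by fastforce
  qed
  define k where "k = j - 2 - length es"
  have len: "length (replicate k False @ es) = j - 2" using gap assms(2) k_def by (cases "es = []") auto
  have "no_adjacent_ones (True # replicate k False @ es)"
  proof (cases "es = []")
    case False
    then have "k \<ge> 1" using gap k_def by simp
    then obtain k' where "k = Suc k'" by (cases k) auto
    then show ?thesis using rep no_adjacent_ones_replicate_False by simp
  next
    case True
    have "no_adjacent_ones (replicate n False)" for n by (induction n) auto
    then show ?thesis using True by (cases k) auto
  qed
  moreover have "digits_val (True # replicate k False @ es) = fib (j - 2 + 2) + m"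
    using len rep digits_val_replicate_False by (simp del: fib.simps)
  ultimately show ?thesis
    unfolding is_zeck_rep_iff k_def[symmetric] le_add_diff_inverse2[OF assms(2)] by (simp del: fib.simps)
qed

lemma zeck_rep_exists: "\<exists>es. is_zeck_rep m es"
proof (induction m rule: less_induct)
  case (less m)
  show ?case
  proof (cases "m = 0")
    case True
    then show ?thesis using is_zeck_rep_iff[of 0 "[]"] by auto
  next
    case False
    then have "m + 1 \<ge> 2" by simp
    then obtain j r where split: "j \<ge> 2" "1 \<le> r" "r \<le> fib (j - 1)" "m + 1 = fib j + r"
      using fib_split by blast
    moreover have "r - 1 < m" using split fib_neq_0_nat[of j] False by simp
    ultimately obtain es where es: "is_zeck_rep (r - 1) es" using less.IH by blast
    have "is_zeck_rep (fib j + (r - 1)) (True # replicate (j - 2 - length es) False @ es)"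
      by (rule zeck_rep_fib_plus[OF es]) (use split in auto)
    moreover have "fib j + (r - 1) = m" using split by simp
    ultimately show ?thesis by blast
  qed
qed

lemma zeck_eq: "is_zeck_rep m es \<Longrightarrow> zeck m = es"
  unfolding zeck_def using zeck_rep_unique by blast

lemma zeck_ones_0: "zeck_ones 0 = 0"
  using zeck_eq[of 0 "[]"] by (simp add: zeck_ones_def is_zeck_rep_iff)

lemma zeck_ones_fib_plus:
  assumes "j \<ge> 2" "m < fib (j - 1)"
  shows "zeck_ones (fib j + m) = 1 + zeck_ones m"
proof -
  obtain es where es: "is_zeck_rep m es" using zeck_rep_exists by blast
  then show ?thesis using zeck_eq[OF es] zeck_eq[OF zeck_rep_fib_plus[OF es assms]]
    by (simp add: zeck_ones_def)
qed

lemma X_eq_zeck_ones_parity: "n \<ge> 1 \<Longrightarrow> X n = int (zeck_ones (n - 1) mod 2)"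
proof (induction n rule: fib_split_induct)
  case (split j r)
  have "zeck_ones (fib j + r - 1) = 1 + zeck_ones (r - 1)"
    using zeck_ones_fib_plus[of j "r - 1"] split by simp
  then show ?case using split X_fib_plus[of j r] by (simp add: mod_Suc)
qed (simp add: zeck_ones_0)

definition Delta :: "nat \<Rightarrow> int" where "Delta w = int (A (B w + 1)) - int (A (B w))"

lemma Delta_fib_minus_step:
  assumes "k \<ge> 3" "1 \<le> s" "s < fib k"
  shows "Delta (fib (k + 2) - s) = - Delta (fib k - s)"
proof -
  have "fib k < fib (k + 2)" using assms by (intro fib_less_fib) auto
  then have "B (fib (k + 2) - s) + B s + 1 = fib (k + 3)"
    using B_fib_minus[of s "k + 2"] assms by (simp add: numeral_3_eq_3)
  moreover have Bk: "B (fib k - s) + B s + 1 = fib (Suc k)" using B_fib_minus assms by simp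
  moreover have "fib (k + 3) = fib (k + 2) + fib (Suc k)" by (simp add: eval_nat_numeral)
  ultimately have shifted: "B (fib (k + 2) - s) = fib (k + 2) + B (fib k - s)" by simp
  have "B s \<le> B (fib k - 1)" using assms by (intro B_mono) simp
  then have "B s + 2 \<le> fib (Suc k)" using B_fib_minus[of 1 k] assms by simp
  moreover have "B s \<ge> 1" using self_le_B[of s] assms by simp
  ultimately have c: "1 \<le> B (fib k - s)" "B (fib k - s) + 1 \<le> fib (Suc k)" using Bk by auto
  have "fib (Suc k) \<le> fib (Suc (k + 2))" by (intro fib_mono) simp
  then show ?thesis
    using A_fib_plus[of "k + 2" "B (fib k - s)"] A_fib_plus[of "k + 2" "B (fib k - s) + 1"] c
      A_le_fib[of "B (fib k - s)" "Suc k"] A_le_fib[of "B (fib k - s) + 1" "Suc k"]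
    unfolding Delta_def shifted by (simp add: of_nat_diff)
qed

lemma Delta_fib_minus_iterate:
  assumes "k \<ge> 3" "1 \<le> s" "s < fib k" "Delta (fib k - s) \<in> {-2, 0, 2}"
  shows "Delta (fib (k + 2 * i) - s) \<in> {-2, 0, 2}"
proof (induction i)
  case (Suc i)
  have "fib k \<le> fib (k + 2 * i)" by (intro fib_mono) simp
  then have "Delta (fib (k + 2 * i + 2) - s) = - Delta (fib (k + 2 * i) - s)"
    using Delta_fib_minus_step[of "k + 2 * i" s] assms by simp
  then show ?case using Suc by auto
qed (use assms in simp)

lemma Delta_fib_plus:
  assumes "j \<ge> 4" "1 \<le> u" "u < fib (j - 1)"
  shows "Delta (fib j + u) = - Delta u"
proof -
  have B: "B (fib j + u) = fib (Suc j) + B u" using B_fib_plus[of j u] assms by simp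
  have "B u \<le> B (fib (j - 1) - 1)" using assms by (intro B_mono) simp
  then have "B u + 2 \<le> fib j" using B_fib_minus[of 1 "j - 1"] assms by simp
  moreover have "B u \<ge> 1" using self_le_B[of u] assms by simp
  moreover have "fib j \<le> fib (Suc (Suc j))" by (intro fib_mono) simp
  ultimately show ?thesis
    using A_fib_plus[of "Suc j" "B u"] A_fib_plus[of "Suc j" "B u + 1"] A_le_fib[of "B u" j]
      A_le_fib[of "B u + 1" j] assms
    unfolding Delta_def B by (simp add: of_nat_diff)
qed

lemma Delta_1: "Delta 1 = 0" and Delta_2: "Delta 2 = 2" and Delta_3: "Delta 3 = 0"
proof -
  have two: "B 1 + 1 = 2" by simp
  show "Delta 1 = 0" unfolding Delta_def two by simp
qed (simp_all add: Delta_def)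

lemma Delta_fib_minus_1: assumes "k \<ge> 3" shows "Delta (fib k - 1) \<in> {-2, 0, 2}"
proof -
  have "\<exists>i. k = 3 + 2 * i \<or> k = 4 + 2 * i" using assms by presburger
  then obtain i where "k = 3 + 2 * i \<or> k = 4 + 2 * i" by blast
  then show ?thesis
    using Delta_fib_minus_iterate[of 3 1 i] Delta_fib_minus_iterate[of 4 1 i] Delta_1 Delta_2
    by (auto simp: fib_3 fib_4)
qed

lemma Delta_fib_plus_A:
  assumes "j \<ge> 2" "1 \<le> r" "r \<le> fib (j - 1)" "Delta (A r) \<in> {-2, 0, 2}"
  shows "Delta (fib j + A r) \<in> {-2, 0, 2}"
proof -
  consider "j = 2" | "j = 3" | "j \<ge> 4" using assms(1) by linarith
  then show ?thesis
  proof cases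
    case 3
    have "A r < fib (j - 1)" using A_less_fib[of r "j - 1"] assms 3 by simp
    then show ?thesis using Delta_fib_plus[of j "A r"] A_pos[of r] assms 3 by auto
  qed (use assms Delta_2 Delta_3 in \<open>auto simp: numeral_2_eq_2 numeral_3_eq_3\<close>)
qed

text \<open>Since \<open>A (F\<^sub>j\<^sub>' + r') = F\<^sub>j\<^sub>'\<^sub>+\<^sub>1 - A r'\<close> and moving the Fibonacci index by two flips the sign
  of \<open>\<Delta>\<close>, the argument is reduced to \<open>A r'\<close> or to \<open>F\<^sub>j\<^sub>' + A r'\<close>, according to the parity of \<open>j - j'\<close>.\<close>
lemma Delta_fib_minus_A_fib_plus:
  assumes "j' + 2 \<le> j" "j' \<ge> 2" "1 \<le> r'" "r' \<le> fib (j' - 1)" "Delta (A r') \<in> {-2, 0, 2}"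
  shows "Delta (fib (Suc j) - A (fib j' + r')) \<in> {-2, 0, 2}"
proof -
  define s where "s = A (fib j' + r')"
  have Ar': "1 \<le> A r'" "A r' \<le> fib (j' - 1)" using A_pos A_le_fib assms by auto
  have fib_j': "fib (Suc j') = fib j' + fib (j' - 1)" using fib_Suc_eq_add_pred[of j'] assms by simp
  have s: "s = fib (Suc j') - A r'" using A_fib_plus assms s_def by simp
  have "s < fib (Suc j')" using s Ar' fib_j' by simp
  then have s_bounds: "1 \<le> s" "s < fib (Suc j')" "s < fib (Suc (Suc j'))"
    using A_pos[of "fib j' + r'"] assms s_def fib_Suc_mono[of "Suc j'"] by auto
  have "\<exists>i. j = j' + 2 * i \<or> j = Suc j' + 2 * i" using assms(1) by presburger
  then obtain i where "j = j' + 2 * i \<or> j = Suc j' + 2 * i" by blast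
  then have "Delta (fib (Suc j) - s) \<in> {-2, 0, 2}"
  proof
    assume "j = j' + 2 * i"
    then have k: "Suc j' + 2 * i = Suc j" by simp
    have "fib (Suc j') - s = A r'" using s Ar' fib_j' by simp
    then have "Delta (fib (Suc j') - s) \<in> {-2, 0, 2}" using assms(5) by simp
    then show ?thesis
      by (rule Delta_fib_minus_iterate[of "Suc j'" s i, unfolded k, rotated 3])
        (use assms(2) s_bounds in auto)
  next
    assume "j = Suc j' + 2 * i"
    then have k: "Suc (Suc j') + 2 * i = Suc j" by simp
    have "fib (Suc (Suc j')) - s = fib j' + A r'" using s Ar' fib_j' by simp
    then have "Delta (fib (Suc (Suc j')) - s) \<in> {-2, 0, 2}"
      using Delta_fib_plus_A[OF assms(2-5)] by simp
    then show ?thesis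
      by (rule Delta_fib_minus_iterate[of "Suc (Suc j')" s i, unfolded k, rotated 3])
        (use assms(2) s_bounds in auto)
  qed
  then show ?thesis unfolding s_def .
qed

lemma Delta_A: "n \<ge> 1 \<Longrightarrow> Delta (A n) \<in> {-2, 0, 2}"
proof (induction n rule: less_induct)
  case (less n)
  show ?case
  proof (cases "n \<ge> 3")
    case False
    then have "n = 1 \<or> n = 2" using less.prems by auto
    then show ?thesis using Delta_1 by auto
  next
    case True
    then have "n \<ge> 2" by simp
    then obtain j r where split: "j \<ge> 2" "1 \<le> r" "r \<le> fib (j - 1)" "n = fib j + r"
      using fib_split by blast
    have "j \<ge> 3" using split True by (cases "j = 2") (auto simp: numeral_2_eq_2)
    have An: "A n = fib (Suc j) - A r" using A_fib_plus split by simp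
    show ?thesis
    proof (cases "r = 1")
      case True
      then show ?thesis using An Delta_fib_minus_1[of "Suc j"] \<open>j \<ge> 3\<close> by simp
    next
      case False
      then have "r \<ge> 2" using split by simp
      then obtain j' r' where split': "j' \<ge> 2" "1 \<le> r'" "r' \<le> fib (j' - 1)" "r = fib j' + r'"
        using fib_split by blast
      have "fib j' < fib (j - 1)" using split split' by simp
      then have "j' + 2 \<le> j" using fib_less_fibD[of j' "j - 1"] by simp
      moreover have "Delta (A r') \<in> {-2, 0, 2}"
        using less.IH[of r'] split split' fib_neq_0_nat[of j] by simp
      ultimately show ?thesis using Delta_fib_minus_A_fib_plus split'(1-3) An split'(4) by simp
    qed
  qed
qed

lemma A_A_B_minus_A_B_A: "int (A (A (B n))) - int (A (B (A n))) \<in> {-2, 0, 2}"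
proof (cases "X n = 0")
  case True
  then show ?thesis unfolding X_def by simp
next
  case False
  then have "A (B n) = B (A n) + 1" using X_cases[of n] unfolding X_def by simp
  moreover have "n \<noteq> 0" using False by (cases "n = 0") auto
  ultimately show ?thesis using Delta_A[of n] unfolding Delta_def by simp
qed

definition rho :: "nat \<Rightarrow> real" where "rho n = real (A n) * phi - real (B (A n)) - 1/2"

lemma rounds_up_A: "rounds_up (A n) = (if rho n \<ge> 0 then 1 else 0)"
  unfolding rounds_up_def rho_def by simp

lemma rho_fib_plus:
  assumes "j \<ge> 2" "1 \<le> r" "r \<le> fib (j - 1)"
  shows "rho (fib j + r) = - rho r - psi ^ (j + 1)"
proof -
  have "A r \<le> fib (j - 1)" using A_le_fib[of r "j - 1"] assms by simp
  also have "fib (j - 1) \<le> fib (Suc j)" by (intro fib_mono) simp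
  finally have "A r \<le> fib (Suc j)" .
  then have A: "real (A (fib j + r)) = real (fib (Suc j)) - real (A r)"
    using A_fib_plus[OF assms] by (simp add: of_nat_diff)
  have B: "real (B (A (fib j + r))) = real (fib (Suc (Suc j))) - real (B (A r)) - 1"
    using B_A_fib_plus[OF assms] by linarith
  have "rho (fib j + r)
      = phi * real (fib (Suc j)) - real (fib (Suc (Suc j))) - (real (A r) * phi - real (B (A r)) - 1/2)"
    unfolding rho_def A B by (simp add: algebra_simps)
  also have "\<dots> = - rho r - psi ^ (j + 1)"
    unfolding rho_def phi_mult_fib by simp
  finally show ?thesis .
qed

text \<open>The constant satisfies \<open>c = 1 + c \<tau>\<^sup>3\<close>, so the margin \<open>\<tau>\<^sup>j\<^sup>+\<^sup>1\<close> consumed by one step of the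
  recursion for \<open>\<rho>\<close> is paid for by moving the bound three powers of \<open>\<tau>\<close> down.\<close>
definition sep_const :: real where "sep_const = 1 / (2 - 2 * tau)"

definition separated :: "nat \<Rightarrow> real \<Rightarrow> bool" where
  "separated J D \<longleftrightarrow>
     D \<ge> sep_const * tau ^ (J + 3 + J mod 2) \<or> D \<le> - (sep_const * tau ^ (J + 4 - J mod 2))"

lemma tau_cube: "tau ^ 3 = 2 * tau - 1"
proof -
  have "tau ^ 3 = tau * (tau * tau)" by (simp add: power3_eq_cube)
  then show ?thesis using tau_sq by (simp add: algebra_simps)
qed

lemma sep_const_pos: "sep_const > 0" using tau_less_1 by (simp add: sep_const_def)

lemma sep_const_eq: "sep_const = 1 + sep_const * tau ^ 3"
  using tau_less_1 unfolding sep_const_def tau_cube by (simp add: field_simps)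

lemma sep_const_tau_power_pos: "sep_const * tau ^ a > 0"
  using sep_const_pos tau_pos by simp

lemma sep_const_tau_power_antimono: "a \<le> b \<Longrightarrow> sep_const * tau ^ b \<le> sep_const * tau ^ a"
  using sep_const_pos tau_pos tau_less_1 by (intro mult_left_mono power_decreasing) auto

lemma sep_const_tau_power_split: "sep_const * tau ^ (j + 1) = tau ^ (j + 1) + sep_const * tau ^ (j + 4)"
proof -
  have "sep_const * tau ^ (j + 1) = (1 + sep_const * tau ^ 3) * tau ^ (j + 1)" using sep_const_eq by simp
  also have "\<dots> = tau ^ (j + 1) + sep_const * (tau ^ 3 * tau ^ (j + 1))" by (simp add: algebra_simps)
  also have "tau ^ 3 * tau ^ (j + 1) = tau ^ (j + 4)" by (subst power_add[symmetric]) (simp add: add.commute)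
  finally show ?thesis .
qed

lemma psi_power_parity: "psi ^ k = (if even k then tau ^ k else - (tau ^ k))"
  unfolding psi_eq by (simp add: power_minus')

lemma separated_nonzero: "separated J D \<Longrightarrow> D \<noteq> 0"
  unfolding separated_def using sep_const_tau_power_pos
  by (metis add_le_same_cancel1 le_minus_iff linorder_not_le neg_0_le_iff_le)

lemma separated_step_pos:
  assumes "D \<ge> sep_const * tau ^ (J + 3 + J mod 2)" "J + 2 \<le> j"
  shows "- D - psi ^ (j + 1) \<le> - (sep_const * tau ^ (j + 4 - j mod 2))"
proof (cases "even j")
  case True
  then have "J + 3 + J mod 2 \<le> j + 1" using assms(2) by presburger
  then have "D \<ge> sep_const * tau ^ (j + 1)" using assms(1) sep_const_tau_power_antimono by (meson order_trans)
  moreover have "psi ^ (j + 1) = - (tau ^ (j + 1))" using True by (subst psi_power_parity) simp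
  moreover have "j + 4 - j mod 2 = j + 4" using True by simp
  ultimately show ?thesis using sep_const_tau_power_split[of j] by simp
next
  case False
  then have "J + 3 + J mod 2 \<le> j + 3" using assms(2) by presburger
  then have "D \<ge> sep_const * tau ^ (j + 3)" using assms(1) sep_const_tau_power_antimono by (meson order_trans)
  moreover have "psi ^ (j + 1) = tau ^ (j + 1)" using False by (subst psi_power_parity) simp
  moreover have "j + 4 - j mod 2 = j + 3" using False by presburger
  ultimately show ?thesis using tau_power_pos[of "j + 1"] by simp
qed

lemma separated_step_neg:
  assumes "D \<le> - (sep_const * tau ^ (J + 4 - J mod 2))" "J + 2 \<le> j"
  shows "- D - psi ^ (j + 1) \<ge> sep_const * tau ^ (j + 3 + j mod 2)"
proof (cases "even j")
  case True
  then have "J + 4 - J mod 2 \<le> j + 3" using assms(2) by presburger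
  then have "- D \<ge> sep_const * tau ^ (j + 3)"
    using assms(1) sep_const_tau_power_antimono by (meson order_trans le_minus_iff)
  moreover have "psi ^ (j + 1) = - (tau ^ (j + 1))" using True by (subst psi_power_parity) simp
  moreover have "j + 3 + j mod 2 = j + 3" using True by simp
  ultimately show ?thesis using tau_power_pos[of "j + 1"] by simp
next
  case False
  then have "J + 4 - J mod 2 \<le> j + 1" using assms(2) by presburger
  then have "- D \<ge> sep_const * tau ^ (j + 1)"
    using assms(1) sep_const_tau_power_antimono by (meson order_trans le_minus_iff)
  moreover have "psi ^ (j + 1) = tau ^ (j + 1)" using False by (subst psi_power_parity) simp
  moreover have "j + 3 + j mod 2 = j + 4" using False by presburger
  ultimately show ?thesis using sep_const_tau_power_split[of j] by (simp only:)
qed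

lemma separated_step:
  assumes "separated J D" "J + 2 \<le> j"
  shows "separated j (- D - psi ^ (j + 1)) \<and> (D > 0 \<longleftrightarrow> - D - psi ^ (j + 1) < 0)"
proof -
  have pos: "sep_const * tau ^ a > 0" for a by (rule sep_const_tau_power_pos)
  consider "D \<ge> sep_const * tau ^ (J + 3 + J mod 2)" | "D \<le> - (sep_const * tau ^ (J + 4 - J mod 2))"
    using assms(1) unfolding separated_def by blast
  then show ?thesis
  proof cases
    case 1
    then have "- D - psi ^ (j + 1) \<le> - (sep_const * tau ^ (j + 4 - j mod 2))"
      using separated_step_pos assms(2) by blast
    then show ?thesis
      unfolding separated_def using 1 pos[of "J + 3 + J mod 2"] pos[of "j + 4 - j mod 2"] by auto
  next
    case 2
    then have "- D - psi ^ (j + 1) \<ge> sep_const * tau ^ (j + 3 + j mod 2)"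
      using separated_step_neg assms(2) by blast
    then show ?thesis
      unfolding separated_def using 2 pos[of "J + 4 - J mod 2"] pos[of "j + 3 + j mod 2"] by auto
  qed
qed

lemma rho_1: "rho 1 = sep_const * tau ^ 5"
proof -
  have "tau ^ 5 = tau ^ 3 * (tau * tau)" by (simp add: eval_nat_numeral)
  then have "tau ^ 5 = 5 * tau - 3" using tau_sq tau_cube by (simp add: algebra_simps)
  then have "sep_const * tau ^ 5 = tau - 1/2"
    using tau_less_1 tau_sq unfolding sep_const_def by (simp add: field_simps)
  then show ?thesis unfolding rho_def by (simp add: phi_eq)
qed

text \<open>The index \<open>j\<close> with \<open>F\<^sub>j < n \<le> F\<^sub>j\<^sub>+\<^sub>1\<close>; \<open>n = 1\<close> gets level 1 instead of the natural 0,
  as the bound on \<open>\<rho> 1\<close> requires.\<close>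
definition level :: "nat \<Rightarrow> nat" where "level n = (if n \<le> 1 then 1 else fibidx n)"

lemma level_fib_plus:
  assumes "j \<ge> 2" "1 \<le> r" "r \<le> fib (j - 1)"
  shows "level (fib j + r) = j"
  using assms fib_Suc_eq_add_pred[of j] fib_neq_0_nat[of j] unfolding level_def
  by (auto intro: fibidx_eqI)

lemma level_add_2_le:
  assumes "j \<ge> 3" "1 \<le> r" "r \<le> fib (j - 1)"
  shows "level r + 2 \<le> j"
proof (cases "r \<le> 1")
  case False
  then have "fib (fibidx r) < fib (j - 1)" using fibidx_bounds(1)[of r] assms by simp
  then show ?thesis using False fib_less_fibD unfolding level_def by fastforce
qed (use assms in \<open>simp add: level_def\<close>)

lemma separated_rho: "n \<ge> 1 \<Longrightarrow> separated (level n) (rho n)"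
proof (induction n rule: fib_split_induct)
  case one
  then show ?case using rho_1 by (simp add: separated_def level_def)
next
  case (split j r)
  show ?case
  proof (cases "j = 2")
    case True
    then have "fib j + r = 2" "rho 2 = rho 1" using split by (simp_all add: rho_def)
    moreover have "fibidx 2 = 2" by (rule fibidx_eqI) (simp_all add: fib_3)
    ultimately show ?thesis using rho_1 by (simp add: separated_def level_def)
  next
    case False
    then have "level r + 2 \<le> j" using split level_add_2_le by simp
    then show ?thesis using separated_step split rho_fib_plus level_fib_plus by simp
  qed
qed

lemma rounds_up_A_fib_plus:
  assumes "j \<ge> 3" "1 \<le> r" "r \<le> fib (j - 1)"
  shows "rounds_up (A (fib j + r)) = 1 - rounds_up (A r)"
proof -
  have "separated (level r) (rho r)" using separated_rho assms by simp
  then have "rho r \<noteq> 0" "rho r > 0 \<longleftrightarrow> - rho r - psi ^ (j + 1) < 0"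
    using separated_nonzero separated_step level_add_2_le[OF assms] by auto
  moreover have "rho (fib j + r) = - rho r - psi ^ (j + 1)" using rho_fib_plus[of j r] assms by simp
  ultimately show ?thesis unfolding rounds_up_A by auto
qed

lemma rounds_up_1: "rounds_up 1 = 1"
  using rounds_up_A[of 1] rho_1 sep_const_tau_power_pos[of 5] by simp

definition std_word :: "nat \<Rightarrow> nat list" where "std_word k = (fib_morph ^^ k) [0]"

lemma fib_morph_append: "fib_morph (u @ v) = fib_morph u @ fib_morph v"
  unfolding fib_morph_def by simp

lemma std_word_0: "std_word 0 = [0]" and std_word_1: "std_word (Suc 0) = [0, 1]"
  unfolding std_word_def fib_morph_def by simp_all

lemma std_word_Suc_Suc: "std_word (Suc (Suc k)) = std_word (Suc k) @ std_word k"
proof (induction k)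
  case (Suc k)
  have "std_word (Suc (Suc (Suc k))) = fib_morph (std_word (Suc (Suc k)))"
    unfolding std_word_def by simp
  also have "\<dots> = fib_morph (std_word (Suc k)) @ fib_morph (std_word k)"
    using Suc by (simp add: fib_morph_append)
  also have "\<dots> = std_word (Suc (Suc k)) @ std_word (Suc k)" unfolding std_word_def by simp
  finally show ?case .
qed (simp add: std_word_def fib_morph_def)

lemma length_std_word: "length (std_word k) = fib (k + 2)"
  by (induction k rule: fib.induct) (simp_all add: std_word_0 std_word_1 std_word_Suc_Suc numeral_3_eq_3)

lemma std_word_prefix: "\<exists>t. std_word (Suc k) = std_word k @ t"
  by (cases k) (auto simp: std_word_0 std_word_1 std_word_Suc_Suc)

lemma nth_std_word_mono:
  "k \<le> k' \<Longrightarrow> i < length (std_word k) \<Longrightarrow> std_word k' ! i = std_word k ! i"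
proof (induction k' rule: dec_induct)
  case (step m)
  obtain t where "std_word (Suc m) = std_word m @ t" using std_word_prefix by blast
  moreover have "length (std_word k) \<le> length (std_word m)"
    unfolding length_std_word using step(1) by (intro fib_mono) simp
  ultimately show ?case using step by (simp add: nth_append)
qed simp

lemma fword_eq_nth_std_word: "i < length (std_word k) \<Longrightarrow> fword i = std_word k ! i"
proof -
  assume i: "i < length (std_word k)"
  have "i < length (std_word i)" using length_std_word le_fib_Suc[of "Suc i"] by simp
  then have "fword i = std_word (max i k) ! i"
    unfolding fword_def std_word_def[symmetric] using nth_std_word_mono[of i "max i k" i] by simp
  also have "\<dots> = std_word k ! i" using nth_std_word_mono[of k "max i k" i] i by simp
  finally show ?thesis .
qed

lemma fword_fib_plus:
  assumes "j \<ge> 3" "i < fib (j - 1)"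
  shows "fword (fib j + i) = fword i"
proof -
  obtain k where k: "j = k + 3" using assms(1) by (metis add.commute le_Suc_ex)
  have len: "length (std_word (Suc k)) = fib j" "length (std_word k) = fib (j - 1)"
    unfolding length_std_word k by (simp_all add: eval_nat_numeral)
  have "fword (fib j + i) = std_word (Suc (Suc k)) ! (fib j + i)"
    using fword_eq_nth_std_word[of "fib j + i" "Suc (Suc k)"] len assms(2) by (simp add: std_word_Suc_Suc)
  also have "\<dots> = std_word k ! i" using len by (simp add: std_word_Suc_Suc nth_append)
  also have "\<dots> = fword i" using fword_eq_nth_std_word[of i k] len assms(2) by simp
  finally show ?thesis .
qed

lemma fword_0: "fword 0 = 0" and fword_1: "fword 1 = 1"
  unfolding fword_def fib_morph_def by simp_all

lemma C_A_offset_eq: "int (C (A n)) - int (A (B n)) - int (A n) = rounds_up (A n) - X n"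
  using C_eq[of "A n"] unfolding X_def by simp

lemma rounds_up_cases: "rounds_up m = 0 \<or> rounds_up m = 1"
  by (simp add: rounds_up_def)

lemma rounds_up_A_eq_X_iff: "n \<ge> 1 \<Longrightarrow> rounds_up (A n) = X n \<longleftrightarrow> fword (n - 1) = 1"
proof (induction n rule: fib_split_induct)
  case one
  then show ?case using rounds_up_1 fword_0 by simp
next
  case (split j r)
  show ?case
  proof (cases "j = 2")
    case True
    then have "fib j + r = 2" using split by simp
    moreover have "X 2 = 1" by (simp add: X_def)
    ultimately show ?thesis using rounds_up_1 fword_1 by simp
  next
    case False
    then have "fword (fib j + r - 1) = fword (r - 1)" using fword_fib_plus[of j "r - 1"] split by simp
    then show ?thesis using split rounds_up_A_fib_plus[of j r] X_fib_plus[of j r] False by auto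
  qed
qed

lemma X_B_and_rounds_up_A_B: "n \<ge> 1 \<Longrightarrow> X (B n) = X n \<and> rounds_up (A (B n)) = 1 - X n"
proof (induction n rule: fib_split_induct)
  case one
  then show ?case using rounds_up_1 by simp
next
  case (split j r)
  have Br: "1 \<le> B r" "B r \<le> fib (Suc j - 1)" using self_le_B[of r] B_le_fib[of j r] split by auto
  then show ?case
    using B_fib_plus split X_fib_plus[of "Suc j" "B r"] rounds_up_A_fib_plus[of "Suc j" "B r"]
      X_fib_plus[of j r]
    by simp
qed

theorem theorem22:
  shows "(\<forall>n. A (B n) \<ge> B (A n))
    \<and> (\<forall>n\<ge>1. int (A (B n)) - int (B (A n)) = int (zeck_ones (n - 1) mod 2))
    \<and> (\<forall>n. B (A (B n)) \<ge> A (B (A n)))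
    \<and> (\<forall>n. int (A (A (B n))) - int (A (B (A n))) \<in> {-2, 0, 2})
    \<and> (\<forall>n. int (C (A n)) - int (A (B n)) - int (A n) \<in> {-1, 0, 1})
    \<and> (\<forall>n\<ge>1. (int (C (A n)) - int (A (B n)) - int (A n) = 0 \<longleftrightarrow> fword (n - 1) = 1))
    \<and> (\<forall>n\<ge>1. int (C (A (B n))) + int (A (B n)) - int (A (B (B n))) - 2 * int (B (A n)) = 1)"
proof (intro conjI allI impI)
  fix n :: nat
  show "B (A n) \<le> A (B n)" by (rule B_A_le_A_B)
  show "A (B (A n)) \<le> B (A (B n))" by (rule A_B_A_le_B_A_B)
  show "int (A (A (B n))) - int (A (B (A n))) \<in> {-2, 0, 2}" by (rule A_A_B_minus_A_B_A)
  show "int (C (A n)) - int (A (B n)) - int (A n) \<in> {-1, 0, 1}"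
    unfolding C_A_offset_eq using rounds_up_cases[of "A n"] X_cases[of n] by auto
  assume n: "n \<ge> 1"
  show "int (A (B n)) - int (B (A n)) = int (zeck_ones (n - 1) mod 2)"
    using X_eq_zeck_ones_parity[OF n] unfolding X_def .
  show "int (C (A n)) - int (A (B n)) - int (A n) = 0 \<longleftrightarrow> fword (n - 1) = 1"
    unfolding C_A_offset_eq using rounds_up_A_eq_X_iff[OF n] by simp
  have "int (C (A (B n))) = int (A (B n)) + int (B (A (B n))) + rounds_up (A (B n))" by (rule C_eq)
  then show "int (C (A (B n))) + int (A (B n)) - int (A (B (B n))) - 2 * int (B (A n)) = 1"
    using X_B_and_rounds_up_A_B[OF n] unfolding X_def by simp
qed

end
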